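(* Suppose an sAEDS has $M_s:=N/N_s$ an integer for every $s\in\mathcal S$, satisfies $|\mathcal F^+_x|=M_s$ for every $x\in\mathcal X_s$ and every $s$, and, for a stationary distribution $Q$ of its state chain, uses for each $x\in\mathcal X_s$ a phased-in code on $\mathcal F^+_x$ with $M_s$ codewords matched to $Q$ restricted to $\mathcal F^+_x$ (i.e. $\hat x\mapsto E_{\hat x}(s)$ on $\mathcal F^+_x$ is this code). Then its average code length satisfies $$L\le H(p)+D(p\|q)+\sigma,\qquad \sigma=\lg\lg e+1-\lg e\approx0.08607.$$
   Context: Let $\mathcal S$ be a finite alphabet with $|\mathcal S|\ge 2$ and $p=\{p(s)\}$ a probability distribution with $p(s)>0$ for all $s$ (i.i.d. source). $\mathcal B=\{0,1\}^*$ (including the empty word), $l(\beta)$ the word length, $\lg=\log_2$. An AEDS with finite state set $\mathcal X$, $|\mathcal X|=N$, consists of maps $E_{\hat x}:\mathcal S\to\mathcal B$ and $F^-_{\hat x}:\mathcal S\to\mathcal X$ ($\hat x\in\mathcal X$) such that for every $x\in\mathcal X$ the words $E_{\hat x}(s)$ over all pairs $(\hat x,s)$ with $F^-_{\hat x}(s)=x$ are pairwise distinct and form a prefix-free set. The state chain is the Markov chain on $\mathcal X$ moving from $\hat x$ to $F^-_{\hat x}(s)$ with probability $p(s)$; for a stationary distribution $Q$ the average code length is $L=\sum_{\hat x}\sum_s p(s)Q(\hat x)l(E_{\hat x}(s))$. A state-divided AEDS (sAEDS) is an AEDS for which the sets $\mathcal X_s=\{F^-_{\hat x}(s):\hat x\in\mathcal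 X\}$ are pairwise disjoint with union $\mathcal X$; $N_s=|\mathcal X_s|$, $q(s)=N_s/N$. For $x\in\mathcal X_s$, $\mathcal F^+_x=\{\hat x: F^-_{\hat x}(s)=x\}$; for each $s$ these sets partition $\mathcal X$. An sAEDS is thus specified by the partitions and, for each $x\in\mathcal X_s$, an injective prefix-free code $\hat x\mapsto E_{\hat x}(s)$ on $\mathcal F^+_x$; the state chain (hence $Q$) depends only on $p$ and the partitions. Phased-in code: for an integer $M\ge1$ and $k=\lceil\lg M\rceil$, a prefix-free code on an $M$-element set with $2^k-M$ codewords of length $k-1$ and $2M-2^k$ codewords of length $k$ (for $M=1$, the single empty word). It is matched to a distribution on that set if the length-$(k-1)$ codewords go to $2^k-M$ elements of largest probability. $H(p)=-\sum_s p(s)\lg p(s)$, $D(p\|q)=\sum_s p(s)\lg(p(s)/q(s))$. *)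

theory Defs
  imports Complex_Main "HOL-Library.Sublist"
begin

text \<open>States: finite type 'x (N = CARD('x)); alphabet: finite type 's.
  E xh s : codeword E_{xh}(s); F xh s : next state F^-_{xh}(s).\<close>

definition AEDS :: "('x::finite \<Rightarrow> 's::finite \<Rightarrow> bool list) \<Rightarrow> ('x \<Rightarrow> 's \<Rightarrow> 'x) \<Rightarrow> bool" where
  "AEDS E F \<longleftrightarrow> (\<forall>x. \<forall>a s b t. F a s = x \<and> F b t = x \<and> (a, s) \<noteq> (b, t)
       \<longrightarrow> \<not> prefix (E a s) (E b t))"

definition Xs :: "('x::finite \<Rightarrow> 's \<Rightarrow> 'x) \<Rightarrow> 's \<Rightarrow> 'x set" where
  "Xs F s = {F xh s | xh. True}"

definition sAEDS :: "('x::finite \<Rightarrow> 's::finite \<Rightarrow> bool list) \<Rightarrow> ('x \<Rightarrow> 's \<Rightarrow> 'x) \<Rightarrow> bool" where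
  "sAEDS E F \<longleftrightarrow> AEDS E F \<and> (\<forall>s t. s \<noteq> t \<longrightarrow> Xs F s \<inter> Xs F t = {})
       \<and> (\<Union>s. Xs F s) = UNIV"

definition Fplus :: "('x \<Rightarrow> 's \<Rightarrow> 'x) \<Rightarrow> 's \<Rightarrow> 'x \<Rightarrow> 'x set" where
  "Fplus F s x = {xh. F xh s = x}"

definition Ns :: "('x::finite \<Rightarrow> 's \<Rightarrow> 'x) \<Rightarrow> 's \<Rightarrow> nat" where
  "Ns F s = card (Xs F s)"

definition qdist :: "('x::finite \<Rightarrow> 's \<Rightarrow> 'x) \<Rightarrow> 's \<Rightarrow> real" where
  "qdist F s = real (Ns F s) / real (card (UNIV :: 'x set))"

definition stationary :: "('s::finite \<Rightarrow> real) \<Rightarrow> ('x::finite \<Rightarrow> 's \<Rightarrow> 'x) \<Rightarrow> ('x \<Rightarrow> real) \<Rightarrow> bool" where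
  "stationary p F Q \<longleftrightarrow> (\<forall>x. Q x \<ge> 0) \<and> (\<Sum>x\<in>UNIV. Q x) = 1
     \<and> (\<forall>x. Q x = (\<Sum>xh\<in>UNIV. \<Sum>s\<in>{s. F xh s = x}. Q xh * p s))"

definition avg_len :: "('s::finite \<Rightarrow> real) \<Rightarrow> ('x::finite \<Rightarrow> real) \<Rightarrow> ('x \<Rightarrow> 's \<Rightarrow> bool list) \<Rightarrow> real" where
  "avg_len p Q E = (\<Sum>xh\<in>UNIV. \<Sum>s\<in>UNIV. p s * Q xh * real (length (E xh s)))"

text \<open>Lengths k-1 are encoded
  as "length + 1 = k" to avoid natural-number truncation (M = 1 gives k = 0).\<close>
definition phased_in_code :: "('a \<Rightarrow> bool list) \<Rightarrow> 'a set \<Rightarrow> nat \<Rightarrow> bool" where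
  "phased_in_code C A M \<longleftrightarrow> M \<ge> 1 \<and> finite A \<and> card A = M \<and> inj_on C A
     \<and> (\<forall>a\<in>A. \<forall>b\<in>A. a \<noteq> b \<longrightarrow> \<not> prefix (C a) (C b))
     \<and> (let k = nat \<lceil>log 2 (real M)\<rceil> in
          (\<forall>a\<in>A. length (C a) = k \<or> length (C a) + 1 = k)
          \<and> card {a\<in>A. length (C a) + 1 = k} = 2 ^ k - M
          \<and> card {a\<in>A. length (C a) = k} = 2 * M - 2 ^ k)"

definition matched_phased_in_code :: "('a \<Rightarrow> bool list) \<Rightarrow> 'a set \<Rightarrow> nat \<Rightarrow> ('a \<Rightarrow> real) \<Rightarrow> bool" where
  "matched_phased_in_code C A M P \<longleftrightarrow> phased_in_code C A M
     \<and> (\<forall>a\<in>A. \<forall>b\<in>A. length (C a) < length (C b) \<longrightarrow> P a \<ge> P b)"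

definition entropy :: "('s::finite \<Rightarrow> real) \<Rightarrow> real" where
  "entropy p = - (\<Sum>s\<in>UNIV. p s * log 2 (p s))"

definition KL_div :: "('s::finite \<Rightarrow> real) \<Rightarrow> ('s \<Rightarrow> real) \<Rightarrow> real" where
  "KL_div p q = (\<Sum>s\<in>UNIV. p s * log 2 (p s / q s))"

end

theory Submission
  imports Defs
begin

text \<open>Group the states by their successor under symbol s: on each fibre E(-, s) is a
  matched phased-in code with M_s = 1/q(s) codewords. If a fraction w of the weight of a
  fibre sits on its 2^k - M short codewords, the expected length there is k - w, and
  matching gives w \<ge> (2^k - M)/M. Hence the excess over lg M is at most lg y + 1 - y with
  y = 2^k/M, whose maximum over y > 0 is \<sigma> (attained at y = lg e). Averaging over the
  symbols turns lg M_s = -lg q(s) into H(p) + D(p||q).\<close>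

definition phased_in_redundancy :: real where
  "phased_in_redundancy = log 2 (log 2 (exp 1)) + 1 - log 2 (exp 1)"

lemma log2_minus_self_le:
  fixes y :: real
  assumes "y > 0"
  shows "log 2 y - y \<le> log 2 (log 2 (exp 1)) - log 2 (exp 1)"
proof -
  define c where "c = ln (2::real)"
  have c: "c > 0" unfolding c_def by simp
  have "ln y + ln c \<le> c * y - 1"
    using ln_le_minus_one[of "c * y"] c assms by (simp add: ln_mult)
  then have "(ln y + ln c) / c \<le> (c * y - 1) / c"
    using c by (simp add: divide_right_mono)
  then have "ln y / c - y \<le> - ln c / c - 1 / c"
    using c by (simp add: field_simps)
  moreover have "log 2 (exp 1) = 1 / c" "log 2 (1 / c) = - ln c / c" "log 2 y = ln y / c"
    unfolding c_def log_def by (simp_all add: ln_div)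
  ultimately show ?thesis by simp
qed

lemma card_mult_sum_le_card_mult_sum_heavy:
  fixes P :: "'a \<Rightarrow> real"
  assumes "finite A" and "S \<subseteq> A"
    and heavy: "\<And>a b. a \<in> S \<Longrightarrow> b \<in> A - S \<Longrightarrow> P b \<le> P a"
  shows "real (card S) * sum P A \<le> real (card A) * sum P S"
proof -
  define T where "T = A - S"
  have fin: "finite S" "finite T" and disj: "S \<inter> T = {}" and A: "A = S \<union> T"
    using assms(1,2) finite_subset unfolding T_def by auto
  have "0 \<le> (\<Sum>a\<in>S. \<Sum>b\<in>T. P a - P b)"
    using heavy unfolding T_def by (intro sum_nonneg) auto
  also have "\<dots> = real (card T) * sum P S - real (card S) * sum P T"
    by (simp add: sum_subtractf sum_distrib_left sum_distrib_right mult.commute)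
  finally have "real (card S) * sum P T \<le> real (card T) * sum P S" by simp
  moreover have "sum P A = sum P S + sum P T" "card A = card S + card T"
    using A sum.union_disjoint[OF fin disj] card_Un_disjoint[OF fin disj] by simp_all
  ultimately show ?thesis by (simp add: algebra_simps)
qed

lemma matched_phased_in_code_weighted_length_le:
  fixes P :: "'a \<Rightarrow> real"
  assumes code: "matched_phased_in_code C A M P" and nonneg: "\<And>a. a \<in> A \<Longrightarrow> 0 \<le> P a"
  shows "(\<Sum>a\<in>A. P a * real (length (C a)))
           \<le> sum P A * (log 2 (real M) + phased_in_redundancy)"
proof -
  define k where "k = nat \<lceil>log 2 (real M)\<rceil>"
  define S where "S = {a\<in>A. length (C a) + 1 = k}"
  have M: "M \<ge> 1" and fin: "finite A" and card_A: "card A = M"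
    and len: "\<And>a. a \<in> A \<Longrightarrow> length (C a) = k \<or> length (C a) + 1 = k"
    and card_S: "card S = 2 ^ k - M"
    and matched: "\<And>a b. a \<in> A \<Longrightarrow> b \<in> A \<Longrightarrow> length (C a) < length (C b) \<Longrightarrow> P b \<le> P a"
    using code unfolding matched_phased_in_code_def phased_in_code_def Let_def k_def S_def
    by auto
  have "real M = 2 powr log 2 (real M)" using M by simp
  also have "\<dots> \<le> 2 powr real k" unfolding k_def by (simp; linarith)
  finally have "M \<le> 2 ^ k"
    by (metis of_nat_le_iff of_nat_numeral of_nat_power powr_realpow zero_less_numeral)
  then have card_S_real: "real (card S) = 2 ^ k - real M"
    using card_S by (simp add: of_nat_diff)
  have "real (card S) * sum P A \<le> real M * sum P S"
    using card_mult_sum_le_card_mult_sum_heavy[of A S P] fin card_A len matched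
    unfolding S_def by fastforce
  then have short_share: "(2 ^ k / real M - 1) * sum P A \<le> sum P S"
    using M card_S_real by (simp add: field_simps)
  have "(\<Sum>a\<in>A. P a * real (length (C a)))
          = (\<Sum>a\<in>A. P a * real k - (if length (C a) + 1 = k then P a else 0))"
    using len by (intro sum.cong) (auto simp: algebra_simps)
  also have "\<dots> = sum P A * real k - sum P S"
    unfolding S_def by (simp add: sum_subtractf sum.inter_filter[OF fin] sum_distrib_right)
  also have "\<dots> \<le> sum P A * (real k + 1 - 2 ^ k / real M)"
    using short_share by (simp add: algebra_simps)
  also have "\<dots> \<le> sum P A * (log 2 (real M) + phased_in_redundancy)"
  proof (rule mult_left_mono)
    have "log 2 (2 ^ k / real M) = real k - log 2 (real M)"
      using M by (simp add: log_divide log_nat_power)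
    then show "real k + 1 - 2 ^ k / real M \<le> log 2 (real M) + phased_in_redundancy"
      using log2_minus_self_le[of "2 ^ k / real M"] M unfolding phased_in_redundancy_def by simp
    show "0 \<le> sum P A" using nonneg by (simp add: sum_nonneg)
  qed
  finally show ?thesis .
qed

lemma matched_phased_in_code_on_fibres_weighted_length_le:
  fixes f :: "'a::finite \<Rightarrow> 'b" and P :: "'a \<Rightarrow> real"
  assumes nonneg: "\<And>a. 0 \<le> P a" and total: "(\<Sum>a\<in>UNIV. P a) = 1"
    and code: "\<And>y. y \<in> range f \<Longrightarrow> matched_phased_in_code C (f -` {y}) M P"
  shows "(\<Sum>a\<in>UNIV. P a * real (length (C a))) \<le> log 2 (real M) + phased_in_redundancy"
proof -
  have "(\<Sum>a\<in>UNIV. P a * real (length (C a)))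
          = (\<Sum>y\<in>range f. \<Sum>a\<in>f -` {y}. P a * real (length (C a)))"
    using sum.group[of UNIV "range f" f "\<lambda>a. P a * real (length (C a))"] by (simp add: vimage_def)
  also have "\<dots> \<le> (\<Sum>y\<in>range f. sum P (f -` {y}) * (log 2 (real M) + phased_in_redundancy))"
    using matched_phased_in_code_weighted_length_le[OF code] nonneg by (simp add: sum_mono)
  also have "\<dots> = log 2 (real M) + phased_in_redundancy"
    using sum.group[of UNIV "range f" f P] total by (simp add: vimage_def sum_distrib_right[symmetric])
  finally show ?thesis .
qed

lemma entropy_add_KL_div:
  assumes "\<And>s. p s > 0" and "\<And>s. q s > 0"
  shows "entropy p + KL_div p q = (\<Sum>s\<in>UNIV. p s * log 2 (1 / q s))"
proof -
  have "p s * log 2 (1 / q s) = p s * log 2 (p s / q s) - p s * log 2 (p s)" for s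
    using assms[of s] by (simp add: log_divide algebra_simps)
  then show ?thesis
    unfolding entropy_def KL_div_def by (simp add: sum_subtractf)
qed

lemma Ns_pos: "Ns F s > 0"
  unfolding Ns_def Xs_def by (auto simp: card_gt_0_iff)

lemma qdist_pos: "qdist (F :: 'x::finite \<Rightarrow> 's \<Rightarrow> 'x) s > 0"
  unfolding qdist_def using Ns_pos[of F s] by (simp add: finite_UNIV_card_ge_0)

lemma qdist_eq_inverse:
  fixes F :: "'x::finite \<Rightarrow> 's \<Rightarrow> 'x"
  assumes "Ns F s dvd card (UNIV :: 'x set)"
  shows "qdist F s = 1 / real (card (UNIV :: 'x set) div Ns F s)"
  using assms Ns_pos[of F s] unfolding qdist_def by (auto simp: of_nat_div elim!: dvdE)

lemma Xs_eq_range: "Xs F s = range (\<lambda>xh. F xh s)"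
  unfolding Xs_def by auto

lemma Fplus_eq_vimage: "Fplus F s x = (\<lambda>xh. F xh s) -` {x}"
  unfolding Fplus_def by auto

lemma avg_len_eq_sum_symbols:
  "avg_len p Q E = (\<Sum>s\<in>UNIV. p s * (\<Sum>xh\<in>UNIV. Q xh * real (length (E xh s))))"
  unfolding avg_len_def by (subst sum.swap) (simp add: sum_distrib_left mult.assoc)

theorem theorem4:
  fixes p :: "'s::finite \<Rightarrow> real"
    and E :: "'x::finite \<Rightarrow> 's \<Rightarrow> bool list"
    and F :: "'x \<Rightarrow> 's \<Rightarrow> 'x"
    and Q :: "'x \<Rightarrow> real"
  assumes "card (UNIV :: 's set) \<ge> 2"
    and "\<And>s. p s > 0"
    and "(\<Sum>s\<in>UNIV. p s) = 1"
    and "sAEDS E F"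
    and "\<And>s. Ns F s dvd card (UNIV :: 'x set)"
    and "\<And>s x. x \<in> Xs F s \<Longrightarrow> card (Fplus F s x) = card (UNIV :: 'x set) div Ns F s"
    and "stationary p F Q"
    and "\<And>s x. x \<in> Xs F s \<Longrightarrow>
           matched_phased_in_code (\<lambda>xh. E xh s) (Fplus F s x) (card (UNIV :: 'x set) div Ns F s) Q"
  shows "avg_len p Q E \<le> entropy p + KL_div p (qdist F)
           + (log 2 (log 2 (exp 1)) + 1 - log 2 (exp 1))"
proof -
  have Q: "\<And>x. 0 \<le> Q x" "(\<Sum>x\<in>UNIV. Q x) = 1"
    using assms(7) unfolding stationary_def by blast+
  have per_symbol: "(\<Sum>xh\<in>UNIV. Q xh * real (length (E xh s)))
      \<le> log 2 (1 / qdist F s) + phased_in_redundancy" for s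
    using matched_phased_in_code_on_fibres_weighted_length_le[OF Q, of "\<lambda>xh. F xh s"] assms(8)
    unfolding qdist_eq_inverse[OF assms(5)] Xs_eq_range Fplus_eq_vimage by simp
  have "avg_len p Q E \<le> (\<Sum>s\<in>UNIV. p s * (log 2 (1 / qdist F s) + phased_in_redundancy))"
    unfolding avg_len_eq_sum_symbols
    using assms(2) per_symbol by (intro sum_mono mult_left_mono) (auto intro: less_imp_le)
  also have "\<dots> = (\<Sum>s\<in>UNIV. p s * log 2 (1 / qdist F s)) + phased_in_redundancy"
    using assms(3) by (simp add: distrib_left sum.distrib sum_distrib_right[symmetric])
  also have "(\<Sum>s\<in>UNIV. p s * log 2 (1 / qdist F s)) = entropy p + KL_div p (qdist F)"
    using assms(2) qdist_pos by (intro entropy_add_KL_div[symmetric])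
  finally show ?thesis unfolding phased_in_redundancy_def .
qed

end
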